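(* Let $a_1,\dots,a_m$ be vectors in $\mathbb R^n$ equipped with a Euclidean norm $\lVert\cdot\rVert$, and suppose $\mathrm{MinHeight}(a_1,\dots,a_m)>0$. Then every $w\in\mathrm{span}(a_1,\dots,a_m)$ can be written as $w=\lambda_1a_1+\dots+\lambda_ma_m$ with $|\lambda_j|\le \lVert w\rVert/\mathrm{MinHeight}(a_1,\dots,a_m)$ for every $j\in\{1,\dots,m\}$.
   Context: $\mathrm{MinHeight}(a_1,\dots,a_m):=\min_{j}\,d\big(a_j,\mathrm{span}(a_1,\dots,\widehat{a}_j,\dots,a_m)\big)$, where $d$ is the distance induced by $\lVert\cdot\rVert$ and $\widehat a_j$ means $a_j$ is omitted. *)

theory Defs
  imports "HOL-Analysis.Analysis"
begin

definition MinHeight :: "(nat \<Rightarrow> 'a::real_normed_vector) \<Rightarrow> nat \<Rightarrow> real" where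
  "MinHeight a m = Min ((\<lambda>j. infdist (a j) (span (a ` ({1..m} - {j})))) ` {1..m})"

end

theory Submission
  imports Defs
begin

text \<open>Write w = c_1 a_1 + ... + c_m a_m. If c_j \<noteq> 0, then w = c_j (a_j - v) with v in the
  span of the other vectors, so norm w = |c_j| dist a_j v is at least |c_j| times the distance
  from a_j to that span, hence at least |c_j| MinHeight.\<close>

lemma span_image_finite:
  fixes a :: "'i \<Rightarrow> 'a::real_vector"
  assumes "finite I"
  shows "span (a ` I) = range (\<lambda>c. \<Sum>j\<in>I. c j *\<^sub>R a j)"
proof
  show "span (a ` I) \<subseteq> range (\<lambda>c. \<Sum>j\<in>I. c j *\<^sub>R a j)"
  proof
    fix w assume "w \<in> span (a ` I)"
    then show "w \<in> range (\<lambda>c. \<Sum>j\<in>I. c j *\<^sub>R a j)"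
    proof (induction rule: span_induct_alt)
      case base
      show ?case by (auto intro!: image_eqI[of _ _ "\<lambda>_. 0"])
    next
      case (step r x y)
      then obtain i d where "i \<in> I" "x = a i" "y = (\<Sum>j\<in>I. d j *\<^sub>R a j)" by auto
      then have "r *\<^sub>R x + y = (\<Sum>j\<in>I. (d(i := d i + r)) j *\<^sub>R a j)"
        using assms by (simp add: sum.remove algebra_simps)
      then show ?case by blast
    qed
  qed
  show "range (\<lambda>c. \<Sum>j\<in>I. c j *\<^sub>R a j) \<subseteq> span (a ` I)"
    by (clarify, intro span_sum span_scale span_base imageI)
qed

lemma abs_coeff_mult_infdist_le_norm:
  fixes a :: "'i \<Rightarrow> 'a::real_normed_vector"
  assumes "finite I" "j \<in> I"
  shows "\<bar>c j\<bar> * infdist (a j) (span (a ` (I - {j}))) \<le> norm (\<Sum>i\<in>I. c i *\<^sub>R a i)"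
proof (cases "c j = 0")
  case True
  then show ?thesis by simp
next
  case False
  define v where "v = - (1 / c j) *\<^sub>R (\<Sum>i\<in>I - {j}. c i *\<^sub>R a i)"
  have v_in_span: "v \<in> span (a ` (I - {j}))"
    unfolding v_def by (intro span_scale span_sum span_base) auto
  have "(\<Sum>i\<in>I. c i *\<^sub>R a i) = c j *\<^sub>R a j + (\<Sum>i\<in>I - {j}. c i *\<^sub>R a i)"
    using assms by (simp add: sum.remove)
  also have "\<dots> = c j *\<^sub>R (a j - v)"
    using False by (simp add: v_def algebra_simps)
  finally have "norm (\<Sum>i\<in>I. c i *\<^sub>R a i) = \<bar>c j\<bar> * dist (a j) v"
    by (simp add: dist_norm)
  moreover have "infdist (a j) (span (a ` (I - {j}))) \<le> dist (a j) v"
    using v_in_span by (rule infdist_le)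
  ultimately show ?thesis
    by (simp add: mult_left_mono)
qed

lemma MinHeight_le_infdist:
  fixes a :: "nat \<Rightarrow> 'a::real_normed_vector"
  assumes "j \<in> {1..m}"
  shows "MinHeight a m \<le> infdist (a j) (span (a ` ({1..m} - {j})))"
  unfolding MinHeight_def using assms by (intro Min_le) auto

theorem mainTheorem7:
  fixes a :: "nat \<Rightarrow> 'a::euclidean_space" and m :: nat and w :: 'a
  assumes "MinHeight a m > 0"
    and "w \<in> span (a ` {1..m})"
  shows "\<exists>c::nat \<Rightarrow> real. w = (\<Sum>j=1..m. c j *\<^sub>R a j) \<and>
           (\<forall>j\<in>{1..m}. \<bar>c j\<bar> \<le> norm w / MinHeight a m)"
proof -
  obtain c where w: "w = (\<Sum>j=1..m. c j *\<^sub>R a j)"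
    using assms(2) span_image_finite[of "{1..m}" a] by auto
  have "\<bar>c j\<bar> \<le> norm w / MinHeight a m" if j: "j \<in> {1..m}" for j
  proof -
    have "\<bar>c j\<bar> * MinHeight a m \<le> \<bar>c j\<bar> * infdist (a j) (span (a ` ({1..m} - {j})))"
      by (rule mult_left_mono[OF MinHeight_le_infdist[OF j]]) simp
    also have "\<dots> \<le> norm w"
      unfolding w using j by (intro abs_coeff_mult_infdist_le_norm) auto
    finally show ?thesis
      using assms(1) by (simp add: pos_le_divide_eq)
  qed
  with w show ?thesis by blast
qed

end
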